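(* Let $q$ be a real quadratic form on $\mathbb{R}^{1,3}$ (identified with the hermitian $2\times 2$ matrices as in the context), and let $Q$ be its symmetric $4\times 4$ matrix, $q(\mathbf{x})=\mathbf{x}^T Q\,\mathbf{x}$. Assume $Q$ is positive semidefinite and degenerate ($Q\ge 0$, $\dim\ker Q>0$). Assume $\ker Q$ contains a non-zero vector $\mathbf{n}=(n_0,\vec n)$ that is space-like or light-like, $\mathbf{n}\cdot\mathbf{n}=n_0^2-|\vec n|^2\le 0$. Define $f(\rho)=\sqrt{q(\mathbf{x})}$ for $\rho=\tfrac12(I+\vec x\cdot\vec\sigma)$ in the Bloch ball $\Omega$, with $\mathbf{x}=(1,\vec x)$. Then $f$ is a convex roof on $\Omega$. Equivalently, $$f(\rho)=\min\Big\{\sum_j p_j f(\pi_j)\ :\ \rho=\sum_j p_j\pi_j,\ \pi_j \text{ pure},\ p_j>0,\ \sum_j p_j=1\Big\}\qquad\text{for all }\rho\in\Omega.$$ Moreover, assume such an $\mathbf{n}$ can be chosen with $n_0=0$. Then the roof is flat: $\Omega$ is foliated into leaves, each the convex hull of some pure states, and $f$ is constant on each leaf.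
   Context: Hermitian $2\times2$ matrices are identified with Minkowski space $\mathbb{R}^{1,3}$ via $\mathbf{x}=(x_0,\vec x)\leftrightarrow \rho=\tfrac12(x_0 I+\vec x\cdot\vec\sigma)$, where $\vec\sigma$ are the Pauli matrices. The Minkowski product is $\mathbf{x}\cdot\mathbf{y}=x_0y_0-\vec x\cdot\vec y$. Under this identification $\det\rho=\tfrac14\mathbf{x}\cdot\mathbf{x}$ and $\mathrm{Tr}\rho=x_0$. The state space (Bloch ball) $\Omega$ is the set of $\mathbf{x}$ with $x_0=1$ and $|\vec x|\le 1$. Pure states are those with $|\vec x|=1$, i.e. the light-like vectors with $x_0=1$. A continuous function $f$ on $\Omega$ is a convex roof if it is convex and, for every $\rho\in\Omega$, there is a decomposition $\rho=\sum_j p_j\pi_j$ into pure states $\pi_j$ ($p_j>0$, $\sum p_j=1$) with $f(\rho)=\sum_j p_j f(\pi_j)$. The roof is flat if these decompositions can be chosen so that $f$ is constant on the convex hull of the $\pi_j$ occurring in each. *)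

theory Defs
  imports "HOL-Analysis.Analysis"
begin

text \<open>Minkowski space R^{1,3} is modelled as real^4; component 1 is the time
  component x_0, components 2,3,4 are the spatial components of vec x.\<close>

definition mink_vec :: "real \<Rightarrow> real^3 \<Rightarrow> real^4" where
  "mink_vec x0 xv = (\<chi> i. if i = 1 then x0 else if i = 2 then xv$1
                          else if i = 3 then xv$2 else xv$3)"

definition mink_time :: "real^4 \<Rightarrow> real" where
  "mink_time v = v$1"

definition mink_space :: "real^4 \<Rightarrow> real^3" where
  "mink_space v = (\<chi> i. if i = 1 then v$2 else if i = 2 then v$3 else v$4)"

definition mink_dot :: "real^4 \<Rightarrow> real^4 \<Rightarrow> real" where
  "mink_dot v w = mink_time v * mink_time w - mink_space v \<bullet> mink_space w"

text \<open>Bloch ball (states with x0 = 1, parametrised by the Bloch vector vec x)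
  and pure states (|vec x| = 1).\<close>
definition bloch_ball :: "(real^3) set" where
  "bloch_ball = {x. norm x \<le> 1}"

definition pure_states :: "(real^3) set" where
  "pure_states = {x. norm x = 1}"

definition roof_decomp :: "((real^3) \<Rightarrow> real) \<Rightarrow> real^3 \<Rightarrow> nat \<Rightarrow> (nat \<Rightarrow> real) \<Rightarrow> (nat \<Rightarrow> real^3) \<Rightarrow> bool" where
  "roof_decomp f \<rho> k p \<pi> \<longleftrightarrow>
     (\<forall>j<k. p j > 0 \<and> \<pi> j \<in> pure_states) \<and>
     (\<Sum>j<k. p j) = 1 \<and>
     \<rho> = (\<Sum>j<k. p j *\<^sub>R \<pi> j) \<and>
     f \<rho> = (\<Sum>j<k. p j * f (\<pi> j))"

definition convex_roof :: "((real^3) \<Rightarrow> real) \<Rightarrow> bool" where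
  "convex_roof f \<longleftrightarrow> continuous_on bloch_ball f \<and> convex_on bloch_ball f \<and>
     (\<forall>\<rho>\<in>bloch_ball. \<exists>k p \<pi>. roof_decomp f \<rho> k p \<pi>)"

definition flat_roof :: "((real^3) \<Rightarrow> real) \<Rightarrow> bool" where
  "flat_roof f \<longleftrightarrow> continuous_on bloch_ball f \<and> convex_on bloch_ball f \<and>
     (\<forall>\<rho>\<in>bloch_ball. \<exists>k p \<pi>. roof_decomp f \<rho> k p \<pi> \<and>
        (\<forall>y\<in>convex hull (\<pi> ` {..<k}). f y = f \<rho>))"

end

theory Submission
  imports Defs
begin

(* For a positive semidefinite matrix Q write |v|_Q = sqrt (v . Q v).  This is a
   seminorm (Cauchy-Schwarz for the form follows from the discriminant of t |-> q(u + t v)),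
   and it does not change when a multiple of a kernel vector is added.  The function of the
   theorem is f(x) = |(1,x)|_Q, a seminorm composed with an affine map, hence continuous and
   convex on the Bloch ball.

   Let n = (n0,nv) be a non-time-like kernel vector and x an interior point of
   the ball.  Along the line x + t w with w = nv - n0 x one has (1, x + t w) = (1 - t n0)(1,x) + t n,
   so f(x + t w) = |1 - t n0| f(x).  The line leaves the ball at parameters t1 < 0 < t2, and
   1 - t n0 stays nonnegative up to these exits: it vanishes only at t = 1/n0, where the line
   passes through nv/n0, a point outside the open ball because n is not time-like.  Hence f is
   affine on the chord, and its two endpoints (pure states) give a decomposition attaining f(x).
   When n0 = 0, f is even constant on the chord, which is flatness.  Pure states decompose
   trivially. *)

lemma mink_vec_time [simp]: "mink_time (mink_vec a x) = a"
  by (simp add: mink_time_def mink_vec_def)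

lemma mink_vec_space [simp]: "mink_space (mink_vec a x) = x"
  by (simp add: mink_space_def mink_vec_def vec_eq_iff forall_3)

lemma mink_vec_time_space: "mink_vec (mink_time v) (mink_space v) = v"
  by (simp add: mink_space_def mink_vec_def mink_time_def vec_eq_iff forall_4)

lemma mink_vec_zero [simp]: "mink_vec 0 0 = 0"
  by (simp add: mink_vec_def vec_eq_iff)

lemma mink_vec_add: "mink_vec a x + mink_vec b y = mink_vec (a + b) (x + y)"
  by (simp add: mink_vec_def vec_eq_iff)

lemma mink_vec_scaleR: "c *\<^sub>R mink_vec a x = mink_vec (c * a) (c *\<^sub>R x)"
  by (simp add: mink_vec_def vec_eq_iff)

lemma continuous_on_mink_vec: "continuous_on S (mink_vec a)"
  unfolding mink_vec_def
proof (intro continuous_on_vec_lambda)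
  fix i :: 4
  show "continuous_on S (\<lambda>x. if i = 1 then a else if i = 2 then x $ 1
                              else if i = 3 then x $ 2 else x $ 3)"
    by (cases "i = 1"; cases "i = 2"; cases "i = 3") (simp_all add: continuous_on_component)
qed

definition form_seminorm :: "real^'n^'n \<Rightarrow> real^'n \<Rightarrow> real" where
  "form_seminorm Q v = sqrt (v \<bullet> (Q *v v))"

lemma form_symmetric:
  fixes Q :: "real^'n^'n"
  assumes "transpose Q = Q"
  shows "u \<bullet> (Q *v v) = v \<bullet> (Q *v u)"
proof -
  have "u \<bullet> (Q *v v) = (u v* Q) \<bullet> v" by (simp add: dot_lmul_matrix)
  also have "u v* Q = transpose Q *v u" by simp
  finally show ?thesis using assms by (simp add: inner_commute)
qed

lemma form_seminorm_scaleR: "form_seminorm Q (c *\<^sub>R v) = \<bar>c\<bar> * form_seminorm Q v"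
proof -
  have "(c *\<^sub>R v) \<bullet> (Q *v (c *\<^sub>R v)) = c\<^sup>2 * (v \<bullet> (Q *v v))"
    by (simp add: matrix_vector_mult_scaleR power2_eq_square)
  then show ?thesis by (simp add: form_seminorm_def real_sqrt_mult)
qed

(* A quadratic polynomial A + 2Bt + Ct^2 that is nonnegative on all of R has nonpositive
   discriminant; this is the source of the Cauchy-Schwarz inequality for the form. *)
lemma nonneg_quadratic_discriminant:
  fixes A B C :: real
  assumes nonneg: "\<forall>t. 0 \<le> A + 2*t*B + t\<^sup>2*C" and "0 \<le> C"
  shows "B\<^sup>2 \<le> A*C"
proof (cases "C = 0")
  case True
  have "B = 0"
  proof (rule ccontr)
    assume "B \<noteq> 0"
    have "0 \<le> A + 2*(-(A+1)/(2*B))*B + (-(A+1)/(2*B))\<^sup>2*C" using nonneg by blast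
    then show False using True \<open>B \<noteq> 0\<close> by (simp add: field_simps)
  qed
  then show ?thesis using True by simp
next
  case False
  then have C: "C > 0" using \<open>0 \<le> C\<close> by auto
  have "0 \<le> A + 2*(-B/C)*B + (-B/C)\<^sup>2*C" using nonneg by blast
  then have "0 \<le> (A*C - B\<^sup>2)/C" using C by (simp add: field_simps power2_eq_square)
  then show ?thesis using C by (simp add: zero_le_divide_iff)
qed

lemma form_seminorm_triangle:
  fixes Q :: "real^'n^'n"
  assumes sym: "transpose Q = Q" and psd: "\<forall>v. 0 \<le> v \<bullet> (Q *v v)"
  shows "form_seminorm Q (u + v) \<le> form_seminorm Q u + form_seminorm Q v"
proof -
  define A B C where "A = u \<bullet> (Q *v u)" and "B = u \<bullet> (Q *v v)" and "C = v \<bullet> (Q *v v)"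
  have expand: "(u + t *\<^sub>R v) \<bullet> (Q *v (u + t *\<^sub>R v)) = A + 2*t*B + t\<^sup>2*C" for t
    using form_symmetric[OF sym, of v u]
    by (simp add: A_def B_def C_def matrix_vector_right_distrib matrix_vector_mult_scaleR
        inner_add_left inner_add_right power2_eq_square algebra_simps)
  have A: "0 \<le> A" and C: "0 \<le> C" using psd by (simp_all add: A_def B_def C_def)
  have "B\<^sup>2 \<le> A*C"
    using psd expand C by (intro nonneg_quadratic_discriminant) metis+
  then have "\<bar>B\<bar> \<le> sqrt A * sqrt C"
    by (metis real_sqrt_abs real_sqrt_le_mono real_sqrt_mult)
  then have "A + 2*B + C \<le> (sqrt A + sqrt C)\<^sup>2"
    using A C by (simp add: power2_sum)
  then have "sqrt (A + 2*B + C) \<le> sqrt A + sqrt C"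
    using A C by (simp add: real_le_lsqrt)
  with expand[of 1] show ?thesis by (simp add: form_seminorm_def A_def B_def C_def)
qed

lemma form_seminorm_add_kernel:
  fixes Q :: "real^'n^'n"
  assumes sym: "transpose Q = Q" and kernel: "Q *v n = 0"
  shows "form_seminorm Q (v + t *\<^sub>R n) = form_seminorm Q v"
proof -
  have "n \<bullet> (Q *v v) = 0" using form_symmetric[OF sym, of n v] kernel by simp
  then show ?thesis using kernel
    by (simp add: form_seminorm_def matrix_vector_right_distrib matrix_vector_mult_scaleR
        inner_add_left)
qed

lemma convex_form_seminorm:
  fixes Q :: "real^'n^'n"
  assumes sym: "transpose Q = Q" and psd: "\<forall>v. 0 \<le> v \<bullet> (Q *v v)"
  shows "convex_on UNIV (form_seminorm Q)"
proof (rule convex_onI)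
  fix t :: real and u v assume t: "0 < t" "t < 1"
  show "form_seminorm Q ((1 - t) *\<^sub>R u + t *\<^sub>R v)
          \<le> (1 - t) * form_seminorm Q u + t * form_seminorm Q v"
    using form_seminorm_triangle[OF sym psd, of "(1 - t) *\<^sub>R u" "t *\<^sub>R v"] t
    by (simp add: form_seminorm_scaleR)
qed simp

lemma continuous_on_form_seminorm: "continuous_on S (form_seminorm Q)"
  unfolding form_seminorm_def
  by (intro continuous_intros linear_continuous_on matrix_vector_mul_bounded_linear)

definition bloch_fun :: "real^4^4 \<Rightarrow> real^3 \<Rightarrow> real" where
  "bloch_fun Q x = form_seminorm Q (mink_vec 1 x)"

lemma bloch_ball_eq_cball: "bloch_ball = cball 0 1"
  by (auto simp: bloch_ball_def)

lemma continuous_on_bloch_fun: "continuous_on S (bloch_fun Q)"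
  using continuous_on_compose[OF continuous_on_mink_vec continuous_on_form_seminorm]
  by (simp add: bloch_fun_def o_def)

(* f is a seminorm composed with the affine map x |-> (1,x), hence convex. *)
lemma convex_bloch_fun:
  assumes sym: "transpose Q = Q" and psd: "\<forall>v. 0 \<le> v \<bullet> (Q *v v)"
  shows "convex_on bloch_ball (bloch_fun Q)"
proof (rule convex_onI)
  show "convex bloch_ball" by (simp add: bloch_ball_eq_cball)
  fix t :: real and x y assume t: "0 < t" "t < 1"
  have affine: "mink_vec 1 ((1 - t) *\<^sub>R x + t *\<^sub>R y)
                  = (1 - t) *\<^sub>R mink_vec 1 x + t *\<^sub>R mink_vec 1 y"
    by (simp add: mink_vec_add mink_vec_scaleR)
  show "bloch_fun Q ((1 - t) *\<^sub>R x + t *\<^sub>R y) \<le> (1 - t) * bloch_fun Q x + t * bloch_fun Q y"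
    unfolding bloch_fun_def affine
    using convex_onD[OF convex_form_seminorm[OF sym psd], of t "mink_vec 1 x" "mink_vec 1 y"] t
    by simp
qed

(* Along the line through x in the direction w = nv - n0 x determined by a kernel vector
   (n0, nv), f scales like |1 - t n0|, since (1, x + t w) = (1 - t n0)(1, x) + t (n0, nv). *)
lemma bloch_fun_kernel_line:
  assumes sym: "transpose Q = Q" and kernel: "Q *v mink_vec n0 nv = 0"
  shows "bloch_fun Q (x + t *\<^sub>R (nv - n0 *\<^sub>R x)) = \<bar>1 - t * n0\<bar> * bloch_fun Q x"
proof -
  have "mink_vec 1 (x + t *\<^sub>R (nv - n0 *\<^sub>R x))
          = (1 - t * n0) *\<^sub>R mink_vec 1 x + t *\<^sub>R mink_vec n0 nv"
    by (simp add: mink_vec_def vec_eq_iff algebra_simps)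
  then show ?thesis
    using form_seminorm_add_kernel[OF sym kernel] by (simp add: bloch_fun_def form_seminorm_scaleR)
qed

lemma ray_exit_unit_ball:
  fixes x w :: "'a::euclidean_space"
  assumes x: "norm x < 1" and w: "w \<noteq> 0"
  obtains d where "0 < d" "norm (x + d *\<^sub>R w) = 1"
    "\<And>s. 0 \<le> s \<Longrightarrow> 1 \<le> norm (x + s *\<^sub>R w) \<Longrightarrow> d \<le> s"
proof -
  have "x \<in> interior (cball 0 1)" using x by simp
  then obtain d where d: "0 < d" "x + d *\<^sub>R w \<in> frontier (cball 0 1)"
    and inside: "\<And>e. 0 \<le> e \<Longrightarrow> e < d \<Longrightarrow> x + e *\<^sub>R w \<in> interior (cball 0 1)"
    using ray_to_frontier[OF bounded_cball _ w] by blast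
  show thesis
  proof (rule that[OF d(1)])
    show "norm (x + d *\<^sub>R w) = 1" using d(2) by simp
    show "d \<le> s" if "0 \<le> s" "1 \<le> norm (x + s *\<^sub>R w)" for s
      using inside[of s] that by force
  qed
qed

(* A non-time-like vector (n0, nv) cannot point along (1, x) for x inside the ball unless n0 = 0;
   so the direction nv - n0 x is nonzero for a nonzero kernel vector. *)
lemma not_timelike_parallel:
  fixes x nv :: "'a::real_inner"
  assumes x: "norm x < 1" and cone: "n0 * n0 \<le> nv \<bullet> nv" and parallel: "nv = n0 *\<^sub>R x"
  shows "n0 = 0"
proof (rule ccontr)
  assume "n0 \<noteq> 0"
  then have "0 < n0 * n0" by (metis not_real_square_gt_zero)
  moreover have "x \<bullet> x < 1" using x by (simp add: norm_eq_sqrt_inner)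
  ultimately have "n0 * n0 * (x \<bullet> x) < n0 * n0"
    using mult_strict_left_mono[of "x \<bullet> x" 1 "n0 * n0"] by simp
  then show False using cone parallel by simp
qed

(* The chord through x in direction \<plusminus>w, w = nv - n0 x, reaches the sphere before the factor
   1 - t n0 changes sign: the zero t = 1/n0 corresponds to the point nv/n0, which has norm
   |nv|/|n0| \<ge> 1 for a non-time-like (n0, nv). *)
lemma chord_exit_before_sign_change:
  fixes x nv :: "'a::euclidean_space"
  assumes x: "norm x < 1" and cone: "n0 * n0 \<le> nv \<bullet> nv"
    and w: "nv - n0 *\<^sub>R x \<noteq> 0" and c: "c \<noteq> 0"
  obtains d where "0 < d" "norm (x + (d * c) *\<^sub>R (nv - n0 *\<^sub>R x)) = 1" "d * c * n0 \<le> 1"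
proof -
  obtain d where d: "0 < d" "norm (x + d *\<^sub>R (c *\<^sub>R (nv - n0 *\<^sub>R x))) = 1"
    and first: "\<And>s. 0 \<le> s \<Longrightarrow> 1 \<le> norm (x + s *\<^sub>R (c *\<^sub>R (nv - n0 *\<^sub>R x))) \<Longrightarrow> d \<le> s"
    using ray_exit_unit_ball[OF x] w c by (metis scaleR_eq_0_iff)
  have "d * c * n0 \<le> 1"
  proof (cases "c * n0 \<le> 0")
    case True
    then show ?thesis using mult_nonneg_nonpos[of d "c * n0"] d(1) by (simp add: mult.assoc)
  next
    case False
    then have n0: "n0 \<noteq> 0" and s: "0 < 1 / (c * n0)" by auto
    have "x + (1 / (c * n0)) *\<^sub>R (c *\<^sub>R (nv - n0 *\<^sub>R x)) = (1 / n0) *\<^sub>R nv"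
      using c n0 by (simp add: algebra_simps)
    moreover have "\<bar>n0\<bar> \<le> norm nv"
      using cone by (metis norm_eq_sqrt_inner real_sqrt_abs real_sqrt_le_mono power2_eq_square)
    ultimately have "1 \<le> norm (x + (1 / (c * n0)) *\<^sub>R (c *\<^sub>R (nv - n0 *\<^sub>R x)))"
      using n0 by (simp add: divide_simps)
    then have "d \<le> 1 / (c * n0)" using first s by simp
    then show ?thesis using False by (simp add: mult.assoc pos_le_divide_eq)
  qed
  with d that show thesis by (simp add: mult.commute)
qed

lemma chord_roof_decomp:
  fixes f :: "real^3 \<Rightarrow> real"
  assumes t: "t1 < 0" "0 < t2"
    and pure: "norm (x + t1 *\<^sub>R w) = 1" "norm (x + t2 *\<^sub>R w) = 1"
    and affine: "\<And>t. t \<in> {t1, t2} \<Longrightarrow> f (x + t *\<^sub>R w) = (1 - t * c) * f x"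
  obtains p \<pi> where "roof_decomp f x 2 p \<pi>" "\<pi> ` {..<2} = {x + t1 *\<^sub>R w, x + t2 *\<^sub>R w}"
proof -
  define p where "p = (\<lambda>j::nat. if j = 0 then t2 / (t2 - t1) else - t1 / (t2 - t1))"
  define \<pi> where "\<pi> = (\<lambda>j::nat. if j = 0 then x + t1 *\<^sub>R w else x + t2 *\<^sub>R w)"
  have "t2 - t1 \<noteq> 0" using t by simp
  then have total: "p 0 + p 1 = 1" and centre: "p 0 * t1 + p 1 * t2 = 0"
    by (simp_all add: p_def diff_divide_distrib[symmetric] divide_simps)
  have two: "j < 2 \<longleftrightarrow> j = 0 \<or> j = 1" for j :: nat by auto
  have "roof_decomp f x 2 p \<pi>"
    unfolding roof_decomp_def
  proof (intro conjI)
    show "\<forall>j<2. 0 < p j \<and> \<pi> j \<in> pure_states"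
      using t pure by (auto simp: two p_def \<pi>_def pure_states_def zero_less_divide_iff divide_less_0_iff)
    show "(\<Sum>j<2. p j) = 1" using total by (simp add: numeral_2_eq_2)
    have "(\<Sum>j<2. p j *\<^sub>R \<pi> j) = (p 0 + p 1) *\<^sub>R x + (p 0 * t1 + p 1 * t2) *\<^sub>R w"
      by (simp add: numeral_2_eq_2 \<pi>_def algebra_simps)
    then show "x = (\<Sum>j<2. p j *\<^sub>R \<pi> j)" using total centre by simp
    have f_ends: "f (\<pi> 0) = (1 - t1 * c) * f x" "f (\<pi> 1) = (1 - t2 * c) * f x"
      using affine by (simp_all add: \<pi>_def)
    have "(\<Sum>j<2. p j * f (\<pi> j)) = p 0 * f (\<pi> 0) + p 1 * f (\<pi> 1)"
      by (simp add: numeral_2_eq_2)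
    also have "\<dots> = ((p 0 + p 1) - c * (p 0 * t1 + p 1 * t2)) * f x"
      unfolding f_ends by (simp add: algebra_simps)
    finally show "f x = (\<Sum>j<2. p j * f (\<pi> j))" using total centre by simp
  qed
  moreover have "\<pi> ` {..<2} = {x + t1 *\<^sub>R w, x + t2 *\<^sub>R w}"
    by (auto simp: \<pi>_def numeral_2_eq_2 lessThan_Suc)
  ultimately show thesis by (rule that)
qed

lemma bloch_fun_roof_decomp:
  fixes Q :: "real^4^4"
  assumes sym: "transpose Q = Q" and kernel: "Q *v n = 0" "n \<noteq> 0"
    and not_timelike: "mink_dot n n \<le> 0" and \<rho>: "\<rho> \<in> bloch_ball"
  obtains k p \<pi> where "roof_decomp (bloch_fun Q) \<rho> k p \<pi>"
    "mink_time n = 0 \<Longrightarrow> \<forall>y\<in>convex hull (\<pi> ` {..<k}). bloch_fun Q y = bloch_fun Q \<rho>"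
proof (cases "norm \<rho> = 1")
  case True
  have "roof_decomp (bloch_fun Q) \<rho> 1 (\<lambda>_. 1) (\<lambda>_. \<rho>)"
    using True by (simp add: roof_decomp_def pure_states_def)
  moreover have "convex hull ((\<lambda>_. \<rho>) ` {..<1::nat}) = {\<rho>}" by (simp add: lessThan_Suc)
  ultimately show thesis by (intro that) auto
next
  case False
  then have x: "norm \<rho> < 1" using \<rho> by (simp add: bloch_ball_def)
  define n0 nv where "n0 = mink_time n" and "nv = mink_space n"
  have n: "n = mink_vec n0 nv" by (simp add: n0_def nv_def mink_vec_time_space)
  have cone: "n0 * n0 \<le> nv \<bullet> nv" using not_timelike by (simp add: mink_dot_def n0_def nv_def)
  define w where "w = nv - n0 *\<^sub>R \<rho>"
  have w: "w \<noteq> 0"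
  proof
    assume "w = 0"
    then have "n0 = 0" using not_timelike_parallel[OF x cone] by (simp add: w_def)
    with \<open>w = 0\<close> have "n = 0" by (simp add: n w_def)
    with kernel(2) show False ..
  qed
  obtain t2 where t2: "0 < t2" "norm (\<rho> + t2 *\<^sub>R w) = 1" "t2 * n0 \<le> 1"
    using chord_exit_before_sign_change[OF x cone, of 1] w by (auto simp: w_def)
  obtain d1 where d1: "0 < d1" "norm (\<rho> + (- d1) *\<^sub>R w) = 1" "- d1 * n0 \<le> 1"
    using chord_exit_before_sign_change[OF x cone, of "-1"] w by (auto simp: w_def)
  have line: "bloch_fun Q (\<rho> + t *\<^sub>R w) = \<bar>1 - t * n0\<bar> * bloch_fun Q \<rho>" for t
    using bloch_fun_kernel_line[OF sym] kernel(1) by (simp add: n w_def)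
  obtain p \<pi> where decomp: "roof_decomp (bloch_fun Q) \<rho> 2 p \<pi>"
    and ends: "\<pi> ` {..<2} = {\<rho> + (- d1) *\<^sub>R w, \<rho> + t2 *\<^sub>R w}"
    by (rule chord_roof_decomp[of "- d1" t2 \<rho> w "bloch_fun Q" n0]) (use d1 t2 line in auto)
  have "bloch_fun Q y = bloch_fun Q \<rho>"
    if "n0 = 0" and y: "y \<in> convex hull (\<pi> ` {..<2})" for y
  proof -
    from y obtain u where "y = (1 - u) *\<^sub>R (\<rho> + (- d1) *\<^sub>R w) + u *\<^sub>R (\<rho> + t2 *\<^sub>R w)"
      unfolding ends segment_convex_hull[symmetric] closed_segment_def by blast
    then have "y = \<rho> + ((1 - u) * - d1 + u * t2) *\<^sub>R w" by (simp add: algebra_simps)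
    then show ?thesis using line \<open>n0 = 0\<close> by simp
  qed
  with decomp show thesis by (intro that) (auto simp: n0_def nv_def)
qed

theorem theorem2:
  fixes Q :: "real^4^4"
  assumes sym: "transpose Q = Q"
    and psd: "\<forall>v. 0 \<le> v \<bullet> (Q *v v)"
    and ker: "\<exists>n. n \<noteq> 0 \<and> Q *v n = 0 \<and> mink_dot n n \<le> 0"
  shows "convex_roof (\<lambda>xv. sqrt (mink_vec 1 xv \<bullet> (Q *v mink_vec 1 xv)))
    \<and> ((\<exists>n. n \<noteq> 0 \<and> Q *v n = 0 \<and> mink_dot n n \<le> 0 \<and> mink_time n = 0)
        \<longrightarrow> flat_roof (\<lambda>xv. sqrt (mink_vec 1 xv \<bullet> (Q *v mink_vec 1 xv))))"
proof -
  have f: "(\<lambda>xv. sqrt (mink_vec 1 xv \<bullet> (Q *v mink_vec 1 xv))) = bloch_fun Q"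
    by (simp add: fun_eq_iff bloch_fun_def form_seminorm_def)
  have regular: "continuous_on bloch_ball (bloch_fun Q)" "convex_on bloch_ball (bloch_fun Q)"
    by (rule continuous_on_bloch_fun, rule convex_bloch_fun[OF sym psd])
  have "convex_roof (bloch_fun Q)"
  proof -
    from ker obtain n where "n \<noteq> 0" "Q *v n = 0" "mink_dot n n \<le> 0" by blast
    then show ?thesis
      unfolding convex_roof_def using regular bloch_fun_roof_decomp[OF sym] by metis
  qed
  moreover have "flat_roof (bloch_fun Q)"
    if "\<exists>n. n \<noteq> 0 \<and> Q *v n = 0 \<and> mink_dot n n \<le> 0 \<and> mink_time n = 0"
  proof -
    from that obtain n where "n \<noteq> 0" "Q *v n = 0" "mink_dot n n \<le> 0" "mink_time n = 0" by blast
    then show ?thesis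
      unfolding flat_roof_def using regular bloch_fun_roof_decomp[OF sym] by metis
  qed
  ultimately show ?thesis unfolding f by blast
qed

end
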